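(* Consider any instance of the splittable capacitated arc routing problem (SCARP) as defined in the context, with robot index set $\mathcal{R}$, and suppose it admits an optimal solution. Then there exists an optimal solution $(x,y)$ such that $|R_{2+}(y)| < m := |\mathcal{U}|$; that is, fewer than $m$ robots spray two or more edges, and every other robot $r\in\mathcal{R}$ either sprays nothing ($S_r(y)=\emptyset$) or sprays exactly one edge ($|S_r(y)|=1$).
   Context: SCARP (basic formulation). Let $\mathcal{G}=(\mathcal{V},\mathcal{U})$ be an undirected connected graph with vertex set $\mathcal{V}=\{1,\dots,n\}$, vertex $1$ being the depot. $\mathcal{U}$ is the set of undirected edges, written as pairs $(i,j)$ with $i<j$, and $\mathcal{E}=\{(i,j),(j,i):(i,j)\in\mathcal{U}\}$ is the set of directed arcs. Each edge $(i,j)\in\mathcal{U}$ has a cost $C_{ij}\ge 0$ and a demand $D_{ij}\ge 0$; $P>0$ is the robot capacity; $\mathcal{R}$ is a finite set of robots (robot tours). Decision variables: $x^r_{ij}\in\{0,1\}$ for $(i,j)\in\mathcal{E}$, $r\in\mathcal{R}$ (robot $r$ traverses arc $(i,j)$), and $y^r_{ij}\ge 0$ for $(i,j)\in\mathcal{U}$, $r\in\mathcal{R}$ (amount sprayed by $r$ on edge $(i,j)$; $y^r_{ij}=0$ if $D_{ij}=0$). The problem is: minimize $\sum_{r\in\mathcal{R}}\sum_{(i,j)\in\mathcal{U}} C_{ij}(x^r_{ij}+x^r_{ji})$ subject to: (i) $\sum_{(i,j)\in\mathcal{U}} y^r_{ij}\le P$ for all $r$; (ii) $\sum_{r\in\mathcal{R}}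 y^r_{ij}=D_{ij}$ for all $(i,j)\in\mathcal{U}$; (iii) $y^r_{ij}\le P(x^r_{ij}+x^r_{ji})$ for all $(i,j)\in\mathcal{U}$, $r$; (iv) flow conservation $\sum_{i:(i,k)\in\mathcal{E}} x^r_{ik}=\sum_{j:(k,j)\in\mathcal{E}} x^r_{kj}$ for all $k\in\mathcal{V}$, $r$; (v) connectivity: for every $\mathcal{S}\subset\mathcal{V}$ with $1\in\mathcal{S}$, $\mathcal{T}=\mathcal{V}\setminus\mathcal{S}$, and every $r$, $\sum_{i\in\mathcal{S},j\in\mathcal{T},(i,j)\in\mathcal{E}} P\,x^r_{ij}\ge \sum_{(i,j)\in\mathcal{U},\,i,j\in\mathcal{T}} y^r_{ij}$. A solution is a pair $(x,y)$ satisfying all constraints; it is optimal if it minimizes the objective. Support: for a solution $y$ and robot $r$, $S_r(y)=\{(i,j)\in\mathcal{U}: y^r_{ij}>0\}$, and $R_{2+}(y)=\{r\in\mathcal{R}: |S_r(y)|\ge 2\}$. *)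

theory Defs
  imports Complex_Main
begin

text \<open>SCARP instance data: vertices V = {1..n}, depot 1, undirected edges U given as
  pairs (i,j) with i < j, costs C, demands D (indexed by edges), capacity P, robot set R.
  Decision variables: x r (i,j) (traversal indicator for arc (i,j), values 0 or 1) and
  y r (i,j) (amount sprayed by robot r on edge (i,j)).\<close>

definition scarp_vertices :: "nat \<Rightarrow> nat set" where
  "scarp_vertices n = {1..n}"

definition scarp_arcs :: "(nat \<times> nat) set \<Rightarrow> (nat \<times> nat) set" where
  "scarp_arcs U = U \<union> {(j, i) | i j. (i, j) \<in> U}"

definition scarp_instance ::
  "nat \<Rightarrow> (nat \<times> nat) set \<Rightarrow> (nat \<times> nat \<Rightarrow> real) \<Rightarrow> (nat \<times> nat \<Rightarrow> real) \<Rightarrow> real \<Rightarrow> 'r set \<Rightarrow> bool"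
  where
  "scarp_instance n U C D P R \<longleftrightarrow>
     1 \<le> n \<and>
     U \<subseteq> {(i, j). i \<in> scarp_vertices n \<and> j \<in> scarp_vertices n \<and> i < j} \<and>
     (\<forall>v \<in> scarp_vertices n. (1, v) \<in> (scarp_arcs U)\<^sup>*) \<and>
     (\<forall>e \<in> U. C e \<ge> 0 \<and> D e \<ge> 0) \<and>
     P > 0 \<and> finite R"

definition scarp_objective ::
  "(nat \<times> nat) set \<Rightarrow> (nat \<times> nat \<Rightarrow> real) \<Rightarrow> 'r set \<Rightarrow> ('r \<Rightarrow> nat \<times> nat \<Rightarrow> real) \<Rightarrow> real" where
  "scarp_objective U C R x = (\<Sum>r\<in>R. \<Sum>(i, j)\<in>U. C (i, j) * (x r (i, j) + x r (j, i)))"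

definition scarp_feasible ::
  "nat \<Rightarrow> (nat \<times> nat) set \<Rightarrow> (nat \<times> nat \<Rightarrow> real) \<Rightarrow> real \<Rightarrow> 'r set
    \<Rightarrow> ('r \<Rightarrow> nat \<times> nat \<Rightarrow> real) \<Rightarrow> ('r \<Rightarrow> nat \<times> nat \<Rightarrow> real) \<Rightarrow> bool" where
  "scarp_feasible n U D P R x y \<longleftrightarrow>
     \<comment> \<open>variable domains\<close>
     (\<forall>r\<in>R. \<forall>a\<in>scarp_arcs U. x r a \<in> {0, 1}) \<and>
     (\<forall>r\<in>R. \<forall>e\<in>U. y r e \<ge> 0 \<and> (D e = 0 \<longrightarrow> y r e = 0)) \<and>
     \<comment> \<open>(i) capacity\<close>
     (\<forall>r\<in>R. (\<Sum>e\<in>U. y r e) \<le> P) \<and>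
     \<comment> \<open>(ii) demand satisfaction\<close>
     (\<forall>e\<in>U. (\<Sum>r\<in>R. y r e) = D e) \<and>
     \<comment> \<open>(iii) spraying only on traversed edges\<close>
     (\<forall>r\<in>R. \<forall>(i, j)\<in>U. y r (i, j) \<le> P * (x r (i, j) + x r (j, i))) \<and>
     \<comment> \<open>(iv) flow conservation\<close>
     (\<forall>r\<in>R. \<forall>k\<in>scarp_vertices n.
        (\<Sum>(i, k')\<in>{a \<in> scarp_arcs U. snd a = k}. x r (i, k')) =
        (\<Sum>(k', j)\<in>{a \<in> scarp_arcs U. fst a = k}. x r (k', j))) \<and>
     \<comment> \<open>(v) connectivity\<close>
     (\<forall>r\<in>R. \<forall>S. S \<subseteq> scarp_vertices n \<and> 1 \<in> S \<longrightarrow>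
        (let T = scarp_vertices n - S in
          (\<Sum>(i, j)\<in>{(i, j) \<in> scarp_arcs U. i \<in> S \<and> j \<in> T}. P * x r (i, j)) \<ge>
          (\<Sum>(i, j)\<in>{(i, j) \<in> U. i \<in> T \<and> j \<in> T}. y r (i, j))))"

definition scarp_optimal ::
  "nat \<Rightarrow> (nat \<times> nat) set \<Rightarrow> (nat \<times> nat \<Rightarrow> real) \<Rightarrow> (nat \<times> nat \<Rightarrow> real) \<Rightarrow> real \<Rightarrow> 'r set
    \<Rightarrow> ('r \<Rightarrow> nat \<times> nat \<Rightarrow> real) \<Rightarrow> ('r \<Rightarrow> nat \<times> nat \<Rightarrow> real) \<Rightarrow> bool" where
  "scarp_optimal n U C D P R x y \<longleftrightarrow>
     scarp_feasible n U D P R x y \<and>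
     (\<forall>x' y'. scarp_feasible n U D P R x' y' \<longrightarrow>
        scarp_objective U C R x \<le> scarp_objective U C R x')"

definition spray_support :: "(nat \<times> nat) set \<Rightarrow> ('r \<Rightarrow> nat \<times> nat \<Rightarrow> real) \<Rightarrow> 'r \<Rightarrow> (nat \<times> nat) set" where
  "spray_support U y r = {e \<in> U. y r e > 0}"

definition R2plus :: "(nat \<times> nat) set \<Rightarrow> 'r set \<Rightarrow> ('r \<Rightarrow> nat \<times> nat \<Rightarrow> real) \<Rightarrow> 'r set" where
  "R2plus U R y = {r \<in> R. card (spray_support U y r) \<ge> 2}"

end

theory Submission
  imports Defs "HOL-Library.Function_Algebras"
begin

text \<open>Keep the routes \<open>x\<close> of an optimal solution and, among all spray plans \<open>y\<close> feasible
  for them, take one with the fewest positive entries \<open>y r e\<close>.  The constraints on \<open>y\<close> see only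
  its row sums, its column sums and which entries are positive.  So if the support carried a
  nonzero matrix with zero row and column sums, shifting \<open>y\<close> along it would kill an entry and
  keep feasibility.  Hence the support, viewed as edges of the bipartite graph between robots and
  edges of \<open>\<G>\<close>, is a forest: it has fewer pairs than the robots and edges it touches.  Every
  robot in \<open>R\<^sub>2\<^sub>+\<close> accounts for at least two pairs, so \<open>|R\<^sub>2\<^sub>+| < m\<close>.\<close>

section \<open>Acyclic supports of bipartite matrices\<close>

definition zero_margins :: "'r set \<Rightarrow> 'e set \<Rightarrow> ('r \<times> 'e \<Rightarrow> real) \<Rightarrow> bool" where
  "zero_margins R U lam \<longleftrightarrow>
     (\<forall>r\<in>R. (\<Sum>e\<in>U. lam (r, e)) = 0) \<and> (\<forall>e\<in>U. (\<Sum>r\<in>R. lam (r, e)) = 0)"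

text \<open>For \<open>S \<subseteq> R \<times> U\<close> this says that \<open>S\<close> is a forest in the bipartite graph on
  \<open>R \<uplus> U\<close>: a cycle would carry alternating weights \<open>\<plusminus>1\<close> with zero margins.\<close>

definition acyclic_support :: "'r set \<Rightarrow> 'e set \<Rightarrow> ('r \<times> 'e) set \<Rightarrow> bool" where
  "acyclic_support R U S \<longleftrightarrow>
     (\<forall>lam. (\<forall>p. lam p \<noteq> 0 \<longrightarrow> p \<in> S) \<longrightarrow> zero_margins R U lam \<longrightarrow> lam = (\<lambda>_. 0))"

interpretation fv: vector_space "(\<lambda>c f x. c * f x) :: real \<Rightarrow> ('a \<Rightarrow> real) \<Rightarrow> ('a \<Rightarrow> real)"
  by unfold_locales (auto simp: fun_eq_iff plus_fun_def algebra_simps)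

lemma sum_apply: "(\<Sum>v\<in>A. g v) z = (\<Sum>v\<in>A. (g v z :: real))"
  by (induct A rule: infinite_finite_induct) (auto simp: plus_fun_def zero_fun_def)

definition unit_vector :: "'a \<Rightarrow> 'a \<Rightarrow> real" where
  "unit_vector z = (\<lambda>w. if w = z then 1 else 0)"

text \<open>Signed incidence vector of \<open>p\<close> as an edge of the bipartite graph on \<open>'r \<uplus> 'e\<close>; a
  weighting of \<open>S\<close> with zero margins is exactly a linear dependence among these vectors.\<close>

definition edge_vector :: "'r \<times> 'e \<Rightarrow> ('r + 'e) \<Rightarrow> real" where
  "edge_vector p = unit_vector (Inl (fst p)) - unit_vector (Inr (snd p))"

lemma inj_edge_vector: "inj edge_vector"
proof (rule injI)
  fix p q :: "'r \<times> 'e"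
  assume "edge_vector p = edge_vector q"
  then have "edge_vector p (Inl (fst p)) = edge_vector q (Inl (fst p))"
    and "edge_vector p (Inr (snd p)) = edge_vector q (Inr (snd p))"
    by auto
  then show "p = q"
    by (auto simp: edge_vector_def unit_vector_def prod_eq_iff split: if_splits)
qed

lemma sum_over_support:
  fixes lam :: "'a \<Rightarrow> real"
  assumes "finite A" "finite S" "\<And>p. lam p \<noteq> 0 \<Longrightarrow> p \<in> S"
  shows "(\<Sum>p\<in>A. lam p) = (\<Sum>p\<in>S. if p \<in> A then lam p else 0)"
proof -
  have "(\<Sum>p\<in>A. lam p) = (\<Sum>p\<in>A \<inter> S. lam p)"
    using assms by (intro sum.mono_neutral_right) auto
  also have "\<dots> = (\<Sum>p\<in>S. if p \<in> A then lam p else 0)"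
    using assms(2) by (simp add: sum.inter_restrict[symmetric] Int_commute)
  finally show ?thesis .
qed

lemma row_sum_eq_edge_vector_sum:
  fixes lam :: "'r \<times> 'e \<Rightarrow> real"
  assumes "finite U" "finite S" "S \<subseteq> R \<times> U" "\<And>p. lam p \<noteq> 0 \<Longrightarrow> p \<in> S"
  shows "(\<Sum>e\<in>U. lam (r, e)) = (\<Sum>p\<in>S. lam p * edge_vector p (Inl r))"
proof -
  have "(\<Sum>e\<in>U. lam (r, e)) = (\<Sum>p\<in>Pair r ` U. lam p)"
    by (simp add: sum.reindex inj_on_def)
  also have "\<dots> = (\<Sum>p\<in>S. if p \<in> Pair r ` U then lam p else 0)"
    using assms by (intro sum_over_support) auto
  also have "\<dots> = (\<Sum>p\<in>S. lam p * edge_vector p (Inl r))"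
    using assms(3) by (intro sum.cong) (auto simp: edge_vector_def unit_vector_def)
  finally show ?thesis .
qed

lemma column_sum_eq_edge_vector_sum:
  fixes lam :: "'r \<times> 'e \<Rightarrow> real"
  assumes "finite R" "finite S" "S \<subseteq> R \<times> U" "\<And>p. lam p \<noteq> 0 \<Longrightarrow> p \<in> S"
  shows "(\<Sum>r\<in>R. lam (r, e)) = - (\<Sum>p\<in>S. lam p * edge_vector p (Inr e))"
proof -
  have "(\<Sum>r\<in>R. lam (r, e)) = (\<Sum>p\<in>(\<lambda>r. (r, e)) ` R. lam p)"
    by (simp add: sum.reindex inj_on_def)
  also have "\<dots> = (\<Sum>p\<in>S. if p \<in> (\<lambda>r. (r, e)) ` R then lam p else 0)"
    using assms by (intro sum_over_support) auto
  also have "\<dots> = - (\<Sum>p\<in>S. lam p * edge_vector p (Inr e))"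
    using assms(3) by (subst sum_negf[symmetric], intro sum.cong)
      (auto simp: edge_vector_def unit_vector_def)
  finally show ?thesis .
qed

lemma independent_edge_vectors:
  fixes S :: "('r \<times> 'e) set"
  assumes "finite R" "finite U" "S \<subseteq> R \<times> U" "acyclic_support R U S"
  shows "fv.independent (edge_vector ` S)"
proof (rule fv.independent_if_scalars_zero)
  have fin: "finite S"
    using assms(1-3) by (meson finite_SigmaI finite_subset)
  then show "finite (edge_vector ` S)" by simp
  fix f :: "(('r + 'e) \<Rightarrow> real) \<Rightarrow> real" and v
  assume comb: "(\<Sum>w\<in>edge_vector ` S. (\<lambda>z. f w * w z)) = 0" and v: "v \<in> edge_vector ` S"
  define lam where "lam p = (if p \<in> S then f (edge_vector p) else 0)" for p
  have supp: "\<And>p. lam p \<noteq> 0 \<Longrightarrow> p \<in> S"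
    by (simp add: lam_def split: if_splits)
  have "(\<Sum>p\<in>S. lam p * edge_vector p z) = 0" for z
  proof -
    have "(\<Sum>p\<in>S. lam p * edge_vector p z) = (\<Sum>w\<in>edge_vector ` S. (\<lambda>z. f w * w z)) z"
      by (simp add: sum_apply sum.reindex inj_on_subset[OF inj_edge_vector] lam_def)
    then show ?thesis
      using comb by simp
  qed
  then have "zero_margins R U lam"
    using row_sum_eq_edge_vector_sum[OF assms(2) fin assms(3) supp]
      column_sum_eq_edge_vector_sum[OF assms(1) fin assms(3) supp]
    by (simp add: zero_margins_def)
  then have "lam = (\<lambda>_. 0)"
    using assms(4) supp by (auto simp: acyclic_support_def)
  then show "f v = 0"
    using v by (metis lam_def imageE)
qed

lemma card_less_Domain_Range:
  fixes S :: "('r \<times> 'e) set"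
  assumes "finite R" "finite U" "S \<subseteq> R \<times> U" "S \<noteq> {}" "acyclic_support R U S"
  shows "card S < card (Domain S) + card (Range S)"
proof -
  have fin: "finite S"
    using assms(1-3) by (meson finite_SigmaI finite_subset)
  define V where "V = Inl ` Domain S \<union> Inr ` Range S"
  have finV: "finite V"
    using fin by (simp add: V_def Domain_fst Range_snd)
  have cardV: "card V = card (Domain S) + card (Range S)"
    unfolding V_def using fin
    by (subst card_Un_disjoint) (auto simp: card_image Domain_fst Range_snd)
  obtain z0 where z0: "z0 \<in> V"
    using assms(4) by (auto simp: V_def)
  define B where "B = (\<lambda>z. unit_vector z - unit_vector z0) ` (V - {z0})"
  have span: "unit_vector z - unit_vector z0 \<in> fv.span B" if "z \<in> V" for z
    using that fv.span_zero by (cases "z = z0") (auto simp: B_def intro: fv.span_base)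
  have "edge_vector p \<in> fv.span B" if "p \<in> S" for p
  proof -
    have "Inl (fst p) \<in> V" "Inr (snd p) \<in> V"
      using that by (auto simp: V_def Domain_fst Range_snd)
    moreover have "edge_vector p = (unit_vector (Inl (fst p)) - unit_vector z0)
        - (unit_vector (Inr (snd p)) - unit_vector z0)"
      by (simp add: edge_vector_def)
    ultimately show ?thesis
      using span fv.span_diff by metis
  qed
  then have "edge_vector ` S \<subseteq> fv.span B"
    by blast
  moreover have "finite B"
    using finV by (simp add: B_def)
  ultimately have "card (edge_vector ` S) \<le> card B"
    using fv.independent_span_bound independent_edge_vectors[OF assms(1-3,5)] by blast
  also have "\<dots> < card V"
    unfolding B_def using finV z0
    by (metis card_Diff1_less card_image_le finite_Diff le_less_trans)
  finally show ?thesis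
    using cardV card_image[OF inj_on_subset[OF inj_edge_vector, of S]] by simp
qed

lemma card_Domain_plus_card_heavy_rows_le:
  fixes S :: "('r \<times> 'e) set"
  assumes "finite S"
  shows "card (Domain S) + card {r. 2 \<le> card (S `` {r})} \<le> card S"
proof -
  define K where "K = {r. 2 \<le> card (S `` {r})}"
  have finD: "finite (Domain S)"
    using assms by (simp add: Domain_fst)
  have fin_rows: "finite (S `` {r})" for r
    using assms by (rule finite_Image)
  have KD: "K \<subseteq> Domain S"
  proof
    fix r
    assume "r \<in> K"
    then have "S `` {r} \<noteq> {}"
      by (auto simp: K_def)
    then show "r \<in> Domain S"
      by blast
  qed
  have "card (Domain S) + card K = (\<Sum>r\<in>Domain S. 1 + (if r \<in> K then 1 else 0))"
    using finD KD
    by (simp add: sum.distrib sum.inter_restrict[symmetric] Int_absorb1 del: One_nat_def)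
  also have "\<dots> \<le> (\<Sum>r\<in>Domain S. card (S `` {r}))"
    using fin_rows by (intro sum_mono) (auto simp: K_def Suc_le_eq card_gt_0_iff)
  also have "\<dots> = card (SIGMA r:Domain S. S `` {r})"
    using finD fin_rows by (simp add: card_SigmaI)
  also have "(SIGMA r:Domain S. S `` {r}) = S"
    by auto
  finally show ?thesis
    by (simp add: K_def)
qed

lemma card_heavy_rows_less:
  fixes S :: "('r \<times> 'e) set"
  assumes "finite R" "finite U" "S \<subseteq> R \<times> U" "U \<noteq> {}" "acyclic_support R U S"
  shows "card {r. 2 \<le> card (S `` {r})} < card U"
proof (cases "S = {}")
  case True
  then show ?thesis
    using assms(2,4) by (simp add: card_gt_0_iff)
next
  case False
  have "finite S"
    using assms(1-3) by (meson finite_SigmaI finite_subset)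
  moreover have "card (Range S) \<le> card U"
    using assms(2,3) by (intro card_mono) auto
  ultimately show ?thesis
    using card_Domain_plus_card_heavy_rows_le[of S] card_less_Domain_Range[OF assms(1-3) False assms(5)]
    by linarith
qed

section \<open>Reducing the support\<close>

lemma zero_margins_uminus: "zero_margins R U lam \<Longrightarrow> zero_margins R U (\<lambda>p. - lam p)"
  by (simp add: zero_margins_def sum_negf)

lemma not_acyclic_supportE:
  assumes "\<not> acyclic_support R U S"
  obtains lam where "\<And>p. lam p \<noteq> 0 \<Longrightarrow> p \<in> S" "zero_margins R U lam" "\<exists>p. 0 < lam p"
proof -
  obtain lam where supp: "\<And>p. lam p \<noteq> 0 \<Longrightarrow> p \<in> S" and margins: "zero_margins R U lam"
    and nonzero: "lam \<noteq> (\<lambda>_. 0)"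
    using assms by (auto simp: acyclic_support_def)
  show ?thesis
  proof (cases "\<exists>p. 0 < lam p")
    case True
    then show ?thesis
      using that supp margins by blast
  next
    case False
    then have "\<exists>p. 0 < - lam p"
      using nonzero by (metis linorder_neqE_linordered_idom neg_0_less_iff_less)
    then show ?thesis
      using that[of "\<lambda>p. - lam p"] supp zero_margins_uminus[OF margins] by simp
  qed
qed

definition pair_support :: "'r set \<Rightarrow> 'e set \<Rightarrow> ('r \<Rightarrow> 'e \<Rightarrow> real) \<Rightarrow> ('r \<times> 'e) set" where
  "pair_support R U y = {(r, e) \<in> R \<times> U. 0 < y r e}"

lemma pair_support_subset: "pair_support R U y \<subseteq> R \<times> U"
  by (auto simp: pair_support_def)

lemma finite_pair_support: "finite R \<Longrightarrow> finite U \<Longrightarrow> finite (pair_support R U y)"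
  using pair_support_subset by (rule finite_subset) simp

lemma pair_support_Image:
  "pair_support R U y `` {r} = (if r \<in> R then spray_support U y r else {})"
  by (auto simp: pair_support_def spray_support_def)

lemma ratio_test:
  fixes y lam :: "'a \<Rightarrow> real"
  assumes "finite A" "\<forall>p\<in>A. 0 \<le> y p" "p1 \<in> A" "0 < lam p1"
  obtains t p0 where "0 \<le> t" "\<forall>p\<in>A. 0 \<le> y p - t * lam p" "p0 \<in> A" "0 < lam p0"
    "y p0 = t * lam p0"
proof -
  define Pos where "Pos = {p \<in> A. 0 < lam p}"
  define t where "t = Min ((\<lambda>p. y p / lam p) ` Pos)"
  have "finite Pos" "p1 \<in> Pos"
    using assms by (auto simp: Pos_def)
  then have "t \<in> (\<lambda>p. y p / lam p) ` Pos" and t_le: "\<And>p. p \<in> Pos \<Longrightarrow> t \<le> y p / lam p"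
    by (auto simp: t_def intro!: Min_in)
  then obtain p0 where p0: "p0 \<in> Pos" "t = y p0 / lam p0"
    by blast
  have "0 \<le> t"
    using p0 assms(2) by (simp add: Pos_def)
  have "0 \<le> y p - t * lam p" if "p \<in> A" for p
  proof (cases "0 < lam p")
    case True
    then show ?thesis
      using t_le[of p] that by (simp add: Pos_def le_divide_eq)
  next
    case False
    then have "t * lam p \<le> 0"
      using \<open>0 \<le> t\<close> by (simp add: mult_nonneg_nonpos)
    with assms(2) that show ?thesis
      by force
  qed
  with \<open>0 \<le> t\<close> p0 show ?thesis
    by (intro that[of t p0]) (auto simp: Pos_def)
qed

lemma smaller_support_same_margins:
  fixes y :: "'r \<Rightarrow> 'e \<Rightarrow> real"
  assumes "finite R" "finite U" and nonneg: "\<forall>r\<in>R. \<forall>e\<in>U. 0 \<le> y r e"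
    and supp: "\<And>p. lam p \<noteq> 0 \<Longrightarrow> p \<in> pair_support R U y"
    and margins: "zero_margins R U lam" and pos: "\<exists>p. 0 < lam p"
  obtains y' where "\<forall>r\<in>R. \<forall>e\<in>U. 0 \<le> y' r e"
    "pair_support R U y' \<subset> pair_support R U y"
    "\<forall>r\<in>R. (\<Sum>e\<in>U. y' r e) = (\<Sum>e\<in>U. y r e)"
    "\<forall>e\<in>U. (\<Sum>r\<in>R. y' r e) = (\<Sum>r\<in>R. y r e)"
proof -
  obtain p1 where p1: "p1 \<in> R \<times> U" "0 < lam p1"
    using pos supp pair_support_subset by (metis less_irrefl subsetD)
  have "finite (R \<times> U)" "\<forall>p\<in>R \<times> U. 0 \<le> case_prod y p"
    using assms(1,2) nonneg by auto
  then obtain t p0 where "0 \<le> t" and nonneg': "\<forall>p\<in>R \<times> U. 0 \<le> case_prod y p - t * lam p"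
    and "p0 \<in> R \<times> U" "0 < lam p0" and vanish: "case_prod y p0 = t * lam p0"
    using p1 by (rule ratio_test)
  define y' where "y' r e = y r e - t * lam (r, e)" for r e
  have "0 < y r e" if "0 < y' r e" for r e
    using that supp[of "(r, e)"] by (cases "lam (r, e) = 0") (auto simp: y'_def pair_support_def)
  then have "pair_support R U y' \<subseteq> pair_support R U y"
    by (auto simp: pair_support_def)
  moreover have "p0 \<notin> pair_support R U y'"
    using vanish by (auto simp: pair_support_def y'_def)
  moreover have "p0 \<in> pair_support R U y"
    using supp \<open>0 < lam p0\<close> by simp
  ultimately have "pair_support R U y' \<subset> pair_support R U y"
    by blast
  moreover have "\<forall>r\<in>R. \<forall>e\<in>U. 0 \<le> y' r e"
    using nonneg' by (simp add: y'_def)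
  moreover have "\<forall>r\<in>R. (\<Sum>e\<in>U. y' r e) = (\<Sum>e\<in>U. y r e)"
    using margins by (simp add: zero_margins_def y'_def sum_subtractf sum_distrib_left[symmetric])
  moreover have "\<forall>e\<in>U. (\<Sum>r\<in>R. y' r e) = (\<Sum>r\<in>R. y r e)"
    using margins by (simp add: zero_margins_def y'_def sum_subtractf sum_distrib_left[symmetric])
  ultimately show ?thesis
    by (intro that)
qed

section \<open>Spray plans of SCARP\<close>

lemma sum_scaled_zero_one_cases:
  fixes x :: "'a \<Rightarrow> real"
  assumes "finite A" "\<forall>a\<in>A. x a \<in> {0, 1}" "0 < P"
  shows "(\<Sum>a\<in>A. P * x a) = 0 \<or> P \<le> (\<Sum>a\<in>A. P * x a)"
proof (cases "\<forall>a\<in>A. x a = 0")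
  case False
  then obtain a where "a \<in> A" "x a = 1"
    using assms(2) by blast
  then have "P * x a \<le> (\<Sum>a\<in>A. P * x a)"
    using assms by (intro member_le_sum) auto
  then show ?thesis
    using \<open>x a = 1\<close> by simp
qed simp

text \<open>Constraints (iii) and (v) bound part of a robot's spraying by \<open>P\<close> times a 0/1
  quantity, so under the capacity constraint they only see which entries are positive.\<close>

lemma sum_le_zero_or_capacity_bound:
  fixes y y' :: "'a \<Rightarrow> real"
  assumes "finite U" "I \<subseteq> U" and L: "L = 0 \<or> P \<le> L" and le_L: "(\<Sum>p\<in>I. y p) \<le> L"
    and "\<forall>p\<in>U. 0 \<le> y p" "\<forall>p\<in>U. 0 \<le> y' p" "\<forall>p\<in>U. 0 < y' p \<longrightarrow> 0 < y p"
    and cap: "(\<Sum>p\<in>U. y' p) \<le> P"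
  shows "(\<Sum>p\<in>I. y' p) \<le> L"
proof (cases "\<forall>p\<in>I. y' p = 0")
  case True
  have "0 \<le> (\<Sum>p\<in>I. y p)"
    using assms(2,5) by (intro sum_nonneg) auto
  with True show ?thesis
    using le_L by simp
next
  case False
  then obtain p where "p \<in> I" "0 < y p"
    using assms(2,6,7) by force
  then have "0 < (\<Sum>p\<in>I. y p)"
    using assms(1,2,5) by (intro sum_pos2) (auto intro: finite_subset)
  moreover have "(\<Sum>p\<in>I. y' p) \<le> (\<Sum>p\<in>U. y' p)"
    using assms(1,2,6) by (intro sum_mono2) auto
  ultimately show ?thesis
    using L le_L cap by linarith
qed

lemma finite_scarp_arcs:
  assumes "finite U"
  shows "finite (scarp_arcs U)"
proof -
  have "scarp_arcs U = U \<union> prod.swap ` U"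
    by (auto simp: scarp_arcs_def)
  with assms show ?thesis
    by simp
qed

lemma edge_constraint_respread:
  fixes y y' :: "'e \<Rightarrow> real"
  assumes "finite U" "e \<in> U" "0 < P" "a \<in> {0, 1}" "b \<in> {0, 1}"
    and "\<forall>e\<in>U. 0 \<le> y e" "\<forall>e\<in>U. 0 \<le> y' e" "\<forall>e\<in>U. 0 < y' e \<longrightarrow> 0 < y e"
    and "(\<Sum>e\<in>U. y' e) \<le> P" and "y e \<le> P * (a + b)"
  shows "y' e \<le> P * (a + b)"
proof -
  have "P * (a + b) = 0 \<or> P \<le> P * (a + b)"
    using assms(3-5) by auto
  then show ?thesis
    using sum_le_zero_or_capacity_bound[OF assms(1), of "{e}"] assms(2,6-10) by simp
qed

lemma cut_constraint_respread:
  fixes x y y' :: "nat \<times> nat \<Rightarrow> real"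
  assumes "finite U" "0 < P" "\<forall>a\<in>scarp_arcs U. x a \<in> {0, 1}"
    and "\<forall>e\<in>U. 0 \<le> y e" "\<forall>e\<in>U. 0 \<le> y' e" "\<forall>e\<in>U. 0 < y' e \<longrightarrow> 0 < y e"
    and "(\<Sum>e\<in>U. y' e) \<le> P"
    and "(\<Sum>(i, j)\<in>{(i, j) \<in> U. i \<in> T \<and> j \<in> T}. y (i, j))
      \<le> (\<Sum>(i, j)\<in>{(i, j) \<in> scarp_arcs U. i \<in> S \<and> j \<in> T}. P * x (i, j))"
  shows "(\<Sum>(i, j)\<in>{(i, j) \<in> U. i \<in> T \<and> j \<in> T}. y' (i, j))
      \<le> (\<Sum>(i, j)\<in>{(i, j) \<in> scarp_arcs U. i \<in> S \<and> j \<in> T}. P * x (i, j))"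
proof -
  define Cut where "Cut = {(i, j) \<in> scarp_arcs U. i \<in> S \<and> j \<in> T}"
  have "(\<Sum>a\<in>Cut. P * x a) = 0 \<or> P \<le> (\<Sum>a\<in>Cut. P * x a)"
    using finite_scarp_arcs[OF assms(1)] assms(2,3)
    by (intro sum_scaled_zero_one_cases) (auto simp: Cut_def intro: finite_subset)
  then show ?thesis
    using sum_le_zero_or_capacity_bound[OF assms(1), of "{(i, j) \<in> U. i \<in> T \<and> j \<in> T}"] assms(4-8)
    by (auto simp: Cut_def)
qed

lemma scarp_feasible_respread:
  assumes feas: "scarp_feasible n U D P R x y" and "finite U" "0 < P"
    and nonneg: "\<forall>r\<in>R. \<forall>e\<in>U. 0 \<le> y' r e"
    and supp: "pair_support R U y' \<subseteq> pair_support R U y"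
    and rows: "\<forall>r\<in>R. (\<Sum>e\<in>U. y' r e) = (\<Sum>e\<in>U. y r e)"
    and cols: "\<forall>e\<in>U. (\<Sum>r\<in>R. y' r e) = (\<Sum>r\<in>R. y r e)"
  shows "scarp_feasible n U D P R x y'"
proof -
  have pos: "\<forall>r\<in>R. \<forall>e\<in>U. 0 < y' r e \<longrightarrow> 0 < y r e"
    using supp by (auto simp: pair_support_def)
  have y_dom: "\<forall>r\<in>R. \<forall>e\<in>U. 0 \<le> y r e \<and> (D e = 0 \<longrightarrow> y r e = 0)"
    using feas by (simp add: scarp_feasible_def)
  have x01: "\<forall>r\<in>R. \<forall>a\<in>scarp_arcs U. x r a \<in> {0, 1}"
    using feas by (simp add: scarp_feasible_def)
  have cap: "\<forall>r\<in>R. (\<Sum>e\<in>U. y' r e) \<le> P"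
    using feas rows by (simp add: scarp_feasible_def)
  have y'_dom: "\<forall>r\<in>R. \<forall>e\<in>U. 0 \<le> y' r e \<and> (D e = 0 \<longrightarrow> y' r e = 0)"
    using nonneg pos y_dom by (metis less_eq_real_def less_irrefl)
  have spray: "\<forall>r\<in>R. \<forall>(i, j)\<in>U. y' r (i, j) \<le> P * (x r (i, j) + x r (j, i))"
  proof (intro ballI, clarify)
    fix r i j
    assume r: "r \<in> R" and ij: "(i, j) \<in> U"
    have "y r (i, j) \<le> P * (x r (i, j) + x r (j, i))"
      using feas r ij by (auto simp: scarp_feasible_def)
    then show "y' r (i, j) \<le> P * (x r (i, j) + x r (j, i))"
      by (rule edge_constraint_respread[OF \<open>finite U\<close> ij \<open>0 < P\<close>, rotated 6])
        (use r ij x01 nonneg pos y_dom cap in \<open>auto simp: scarp_arcs_def\<close>)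
  qed
  have conn: "\<forall>r\<in>R. \<forall>S. S \<subseteq> scarp_vertices n \<and> 1 \<in> S \<longrightarrow>
        (let T = scarp_vertices n - S in
          (\<Sum>(i, j)\<in>{(i, j) \<in> scarp_arcs U. i \<in> S \<and> j \<in> T}. P * x r (i, j)) \<ge>
          (\<Sum>(i, j)\<in>{(i, j) \<in> U. i \<in> T \<and> j \<in> T}. y' r (i, j)))"
    unfolding Let_def
  proof (intro ballI allI impI)
    fix r S
    assume r: "r \<in> R" and S: "S \<subseteq> scarp_vertices n \<and> 1 \<in> S"
    let ?T = "scarp_vertices n - S"
    let ?cut = "\<Sum>(i, j)\<in>{(i, j) \<in> scarp_arcs U. i \<in> S \<and> j \<in> ?T}. P * x r (i, j)"
    have "(\<Sum>(i, j)\<in>{(i, j) \<in> U. i \<in> ?T \<and> j \<in> ?T}. y r (i, j)) \<le> ?cut"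
      using feas r S by (simp add: scarp_feasible_def Let_def)
    then show "?cut \<ge> (\<Sum>(i, j)\<in>{(i, j) \<in> U. i \<in> ?T \<and> j \<in> ?T}. y' r (i, j))"
      by (rule cut_constraint_respread[OF \<open>finite U\<close> \<open>0 < P\<close>, rotated 5])
        (use r nonneg pos y_dom cap x01 in auto)
  qed
  show ?thesis
    using feas y'_dom cap cols spray conn by (simp add: scarp_feasible_def)
qed

lemma scarp_feasible_acyclic_support:
  assumes feas: "scarp_feasible n U D P R x y0" and "finite R" "finite U" "0 < P"
  obtains y where "scarp_feasible n U D P R x y" "acyclic_support R U (pair_support R U y)"
proof -
  obtain y where feas_y: "scarp_feasible n U D P R x y"
    and least: "\<And>y'. scarp_feasible n U D P R x y' \<Longrightarrow>
                  card (pair_support R U y) \<le> card (pair_support R U y')"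
    using ex_has_least_nat[of "scarp_feasible n U D P R x" y0 "\<lambda>y. card (pair_support R U y)"]
      feas by blast
  have "acyclic_support R U (pair_support R U y)"
  proof (rule ccontr)
    assume "\<not> acyclic_support R U (pair_support R U y)"
    then obtain lam where lam_supp: "\<And>p. lam p \<noteq> 0 \<Longrightarrow> p \<in> pair_support R U y"
      and lam_margins: "zero_margins R U lam" and lam_pos: "\<exists>p. 0 < lam p"
      by (rule not_acyclic_supportE) blast
    have y_nonneg: "\<forall>r\<in>R. \<forall>e\<in>U. 0 \<le> y r e"
      using feas_y by (simp add: scarp_feasible_def)
    obtain y' where nonneg': "\<forall>r\<in>R. \<forall>e\<in>U. 0 \<le> y' r e"
      and smaller: "pair_support R U y' \<subset> pair_support R U y"
      and rows: "\<forall>r\<in>R. (\<Sum>e\<in>U. y' r e) = (\<Sum>e\<in>U. y r e)"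
      and cols: "\<forall>e\<in>U. (\<Sum>r\<in>R. y' r e) = (\<Sum>r\<in>R. y r e)"
      by (rule smaller_support_same_margins[OF \<open>finite R\<close> \<open>finite U\<close> y_nonneg lam_supp
            lam_margins lam_pos])
    have "scarp_feasible n U D P R x y'"
      using smaller by (intro scarp_feasible_respread[OF feas_y \<open>finite U\<close> \<open>0 < P\<close> nonneg' _ rows cols]) blast
    then have "card (pair_support R U y) \<le> card (pair_support R U y')"
      by (rule least)
    moreover have "card (pair_support R U y') < card (pair_support R U y)"
      using finite_pair_support[OF \<open>finite R\<close> \<open>finite U\<close>] smaller by (rule psubset_card_mono)
    ultimately show False
      by linarith
  qed
  with feas_y show ?thesis
    by (rule that)
qed

lemma scarp_instanceD:
  assumes "scarp_instance n U C D P R"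
  shows "finite U" "finite R" "0 < P"
proof -
  have "U \<subseteq> {1..n} \<times> {1..n}"
    using assms by (auto simp: scarp_instance_def scarp_vertices_def)
  then show "finite U"
    by (rule finite_subset) simp
  show "finite R" "0 < P"
    using assms by (auto simp: scarp_instance_def)
qed

lemma card_less_2_cases: "finite A \<Longrightarrow> card A < 2 \<Longrightarrow> A = {} \<or> card A = 1"
  by (metis One_nat_def card_0_eq less_2_cases)

theorem theorem1:
  fixes n :: nat and U :: "(nat \<times> nat) set" and C D :: "nat \<times> nat \<Rightarrow> real"
    and P :: real and R :: "'r set"
  assumes inst: "scarp_instance n U C D P R"
    and nonempty: "U \<noteq> {}"
    and has_opt: "\<exists>x y. scarp_optimal n U C D P R x y"
  shows "\<exists>x y. scarp_optimal n U C D P R x y \<and>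
           card (R2plus U R y) < card U \<and>
           (\<forall>r \<in> R - R2plus U R y.
              spray_support U y r = {} \<or> card (spray_support U y r) = 1)"
proof -
  note fin = scarp_instanceD[OF inst]
  obtain x y0 where opt: "scarp_optimal n U C D P R x y0"
    using has_opt by blast
  then have "scarp_feasible n U D P R x y0"
    by (simp add: scarp_optimal_def)
  then obtain y where feas: "scarp_feasible n U D P R x y"
    and acyclic: "acyclic_support R U (pair_support R U y)"
    using fin(2,1,3) by (rule scarp_feasible_acyclic_support)
  have "scarp_optimal n U C D P R x y"
    using opt feas by (simp add: scarp_optimal_def)
  moreover have "R2plus U R y = {r. 2 \<le> card (pair_support R U y `` {r})}"
    by (auto simp: R2plus_def pair_support_Image)
  then have "card (R2plus U R y) < card U"
    using card_heavy_rows_less[OF fin(2,1) pair_support_subset nonempty acyclic] by simp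
  moreover have "\<forall>r \<in> R - R2plus U R y.
      spray_support U y r = {} \<or> card (spray_support U y r) = 1"
  proof
    fix r
    assume "r \<in> R - R2plus U R y"
    then have "card (spray_support U y r) < 2"
      by (auto simp: R2plus_def)
    with fin(1) show "spray_support U y r = {} \<or> card (spray_support U y r) = 1"
      by (intro card_less_2_cases) (simp_all add: spray_support_def)
  qed
  ultimately show ?thesis
    by blast
qed

end
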